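(* Let $G=(V,E)$ be a directed graph with $n=|V|$ and $A$ a node-weighting, and let $1\le\alpha\le\log n$. Suppose some $A$-respecting $h$-length symmetric demand $D$ has $h\cdot s$-length sparsity at most $\phi$ with respect to some $h\cdot s$-length moving cut $C$. Then the $\alpha$-exponential demand $D^{\alpha}_{h,A}$ has $\frac{h\cdot s}{2}$-length sparsity at most $2^{8\alpha+1}\phi$ with respect to the same cut $C$, i.e. $|C|/\mathrm{sep}_{hs/2}(C,D^\alpha_{h,A})\le 2^{8\alpha+1}\phi$.
   Context: $G$ has positive integer edge lengths $\ell(e)$ and capacities $u(e)$; $\mathrm{dist}(u,v)$ is the directed distance in $G$ and $\overline{\mathrm{dist}}(u,v)=\mathrm{dist}(u,v)+\mathrm{dist}(v,u)$. Node-weighting $A\ge0$; demand $D:V\times V\to\mathbb{R}_{\ge0}$, $|D|=\sum D(u,v)$; $A$-respecting: $\max\{\sum_wD(v,w),\sum_wD(w,v)\}\le A(v)$; $h$-length: $D(u,v)>0\Rightarrow\mathrm{dist}(u,v)\le h$; symmetric: $D(u,v)=D(v,u)$. An $H$-length moving cut is $C:E\to\{0,\tfrac1H,\dots\}\cap[0,1]$, $|C|=\sum_eu(e)C(e)$; $G-C$ has lengths $\ell(e)+H\cdot C(e)$; $\mathrm{sep}_{h'}(C,D)=\sum_{(u,v):\mathrm{dist}_{G-C}(u,v)>h'}D(u,v)$; $h'$-length sparsity $\mathrm{spars}_{h'}(C,D)=|C|/\mathrm{sep}_{h'}(C,D)$. Exponential weights (for $1\le\alpha\le\log n$): $w_h^\alpha(u,v)=1$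 if $u=v$; $=2^{-\alpha\overline{\mathrm{dist}}(u,v)/h}$ if $u\neq v$ and $\overline{\mathrm{dist}}(u,v)\le\frac{2h\log_2 n}{\alpha}$; $=0$ otherwise. $w_h^\alpha(u)=\sum_{b\in V}w_h^\alpha(u,b)$, $M_h^\alpha(u,v)=w_h^\alpha(u,v)/w_h^\alpha(u)$, and $D^\alpha_{h,A}(u,v)=A(u)M_h^\alpha(u,v)+A(v)M_h^\alpha(v,u)$. *)

theory Defs
  imports "HOL-Analysis.Analysis"
begin

definition lengraph :: "'a set \<Rightarrow> 'e set \<Rightarrow> ('e \<Rightarrow> 'a) \<Rightarrow> ('e \<Rightarrow> 'a)
    \<Rightarrow> ('e \<Rightarrow> nat) \<Rightarrow> ('e \<Rightarrow> nat) \<Rightarrow> bool" where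
  "lengraph V E src tgt ell cap \<longleftrightarrow> finite V \<and> finite E \<and>
     (\<forall>e\<in>E. src e \<in> V \<and> tgt e \<in> V \<and> ell e > 0 \<and> cap e > 0)"

fun walk :: "'e set \<Rightarrow> ('e \<Rightarrow> 'a) \<Rightarrow> ('e \<Rightarrow> 'a) \<Rightarrow> 'a \<Rightarrow> 'e list \<Rightarrow> 'a \<Rightarrow> bool" where
  "walk E src tgt x [] y \<longleftrightarrow> x = y"
| "walk E src tgt x (e # es) y \<longleftrightarrow> e \<in> E \<and> src e = x \<and> walk E src tgt (tgt e) es y"

text \<open>Directed distance w.r.t. edge lengths len (\<infinity> if unreachable).\<close>
definition gdist :: "'e set \<Rightarrow> ('e \<Rightarrow> 'a) \<Rightarrow> ('e \<Rightarrow> 'a) \<Rightarrow> ('e \<Rightarrow> real) \<Rightarrow> 'a \<Rightarrow> 'a \<Rightarrow> ereal" where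
  "gdist E src tgt len x y = (INF es \<in> {es. walk E src tgt x es y}. ereal (sum_list (map len es)))"

definition gdistbar :: "'e set \<Rightarrow> ('e \<Rightarrow> 'a) \<Rightarrow> ('e \<Rightarrow> 'a) \<Rightarrow> ('e \<Rightarrow> real) \<Rightarrow> 'a \<Rightarrow> 'a \<Rightarrow> ereal" where
  "gdistbar E src tgt len x y = gdist E src tgt len x y + gdist E src tgt len y x"

definition A_respecting :: "'a set \<Rightarrow> ('a \<Rightarrow> real) \<Rightarrow> ('a \<Rightarrow> 'a \<Rightarrow> real) \<Rightarrow> bool" where
  "A_respecting V A D \<longleftrightarrow> (\<forall>v\<in>V. max (\<Sum>w\<in>V. D v w) (\<Sum>w\<in>V. D w v) \<le> A v)"

definition is_demand :: "'a set \<Rightarrow> ('a \<Rightarrow> 'a \<Rightarrow> real) \<Rightarrow> bool" where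
  "is_demand V D \<longleftrightarrow> (\<forall>x y. D x y \<ge> 0) \<and> (\<forall>x y. D x y \<noteq> 0 \<longrightarrow> x \<in> V \<and> y \<in> V)"

definition h_length_demand :: "'e set \<Rightarrow> ('e \<Rightarrow> 'a) \<Rightarrow> ('e \<Rightarrow> 'a) \<Rightarrow> ('e \<Rightarrow> nat)
    \<Rightarrow> real \<Rightarrow> ('a \<Rightarrow> 'a \<Rightarrow> real) \<Rightarrow> bool" where
  "h_length_demand E src tgt ell h D \<longleftrightarrow>
     (\<forall>x y. D x y > 0 \<longrightarrow> gdist E src tgt (\<lambda>e. real (ell e)) x y \<le> ereal h)"

definition symmetric_demand :: "('a \<Rightarrow> 'a \<Rightarrow> real) \<Rightarrow> bool" where
  "symmetric_demand D \<longleftrightarrow> (\<forall>x y. D x y = D y x)"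

definition moving_cut :: "'e set \<Rightarrow> real \<Rightarrow> ('e \<Rightarrow> real) \<Rightarrow> bool" where
  "moving_cut E H C \<longleftrightarrow> (\<forall>e\<in>E. (\<exists>k::nat. C e = real k / H) \<and> 0 \<le> C e \<and> C e \<le> 1)"

definition cut_size :: "'e set \<Rightarrow> ('e \<Rightarrow> nat) \<Rightarrow> ('e \<Rightarrow> real) \<Rightarrow> real" where
  "cut_size E cap C = (\<Sum>e\<in>E. real (cap e) * C e)"

definition cut_len :: "('e \<Rightarrow> nat) \<Rightarrow> real \<Rightarrow> ('e \<Rightarrow> real) \<Rightarrow> 'e \<Rightarrow> real" where
  "cut_len ell H C e = real (ell e) + H * C e"

definition sep :: "'a set \<Rightarrow> 'e set \<Rightarrow> ('e \<Rightarrow> 'a) \<Rightarrow> ('e \<Rightarrow> 'a) \<Rightarrow> ('e \<Rightarrow> nat)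
    \<Rightarrow> real \<Rightarrow> ('e \<Rightarrow> real) \<Rightarrow> real \<Rightarrow> ('a \<Rightarrow> 'a \<Rightarrow> real) \<Rightarrow> real" where
  "sep V E src tgt ell H C h' D =
     (\<Sum>p\<in>{(x,y) \<in> V \<times> V. gdist E src tgt (cut_len ell H C) x y > ereal h'}. D (fst p) (snd p))"

definition spars :: "'a set \<Rightarrow> 'e set \<Rightarrow> ('e \<Rightarrow> 'a) \<Rightarrow> ('e \<Rightarrow> 'a) \<Rightarrow> ('e \<Rightarrow> nat) \<Rightarrow> ('e \<Rightarrow> nat)
    \<Rightarrow> real \<Rightarrow> ('e \<Rightarrow> real) \<Rightarrow> real \<Rightarrow> ('a \<Rightarrow> 'a \<Rightarrow> real) \<Rightarrow> ereal" where
  "spars V E src tgt ell cap H C h' D =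
     (let s = sep V E src tgt ell H C h' D in
      if s = 0 then \<infinity> else ereal (cut_size E cap C / s))"

definition expw :: "'a set \<Rightarrow> 'e set \<Rightarrow> ('e \<Rightarrow> 'a) \<Rightarrow> ('e \<Rightarrow> 'a) \<Rightarrow> ('e \<Rightarrow> nat)
    \<Rightarrow> real \<Rightarrow> real \<Rightarrow> 'a \<Rightarrow> 'a \<Rightarrow> real" where
  "expw V E src tgt ell h \<alpha> x y =
     (let d = gdistbar E src tgt (\<lambda>e. real (ell e)) x y in
      if x = y then 1
      else if d \<le> ereal (2 * h * log 2 (real (card V)) / \<alpha>)
        then 2 powr (- \<alpha> * real_of_ereal d / h)
      else 0)"

definition expw_node :: "'a set \<Rightarrow> 'e set \<Rightarrow> ('e \<Rightarrow> 'a) \<Rightarrow> ('e \<Rightarrow> 'a) \<Rightarrow> ('e \<Rightarrow> nat)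
    \<Rightarrow> real \<Rightarrow> real \<Rightarrow> 'a \<Rightarrow> real" where
  "expw_node V E src tgt ell h \<alpha> x = (\<Sum>b\<in>V. expw V E src tgt ell h \<alpha> x b)"

definition expM :: "'a set \<Rightarrow> 'e set \<Rightarrow> ('e \<Rightarrow> 'a) \<Rightarrow> ('e \<Rightarrow> 'a) \<Rightarrow> ('e \<Rightarrow> nat)
    \<Rightarrow> real \<Rightarrow> real \<Rightarrow> 'a \<Rightarrow> 'a \<Rightarrow> real" where
  "expM V E src tgt ell h \<alpha> x y = expw V E src tgt ell h \<alpha> x y / expw_node V E src tgt ell h \<alpha> x"

definition exp_demand :: "'a set \<Rightarrow> 'e set \<Rightarrow> ('e \<Rightarrow> 'a) \<Rightarrow> ('e \<Rightarrow> 'a) \<Rightarrow> ('e \<Rightarrow> nat)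
    \<Rightarrow> real \<Rightarrow> real \<Rightarrow> ('a \<Rightarrow> real) \<Rightarrow> 'a \<Rightarrow> 'a \<Rightarrow> real" where
  "exp_demand V E src tgt ell h \<alpha> A x y =
     A x * expM V E src tgt ell h \<alpha> x y + A y * expM V E src tgt ell h \<alpha> y x"

end

theory Submission imports Defs begin

text \<open>If D u v > 0, then u and v are within round-trip distance 2h, and the exponential
  weights of nearby nodes are comparable: w v b \<le> K w u b + K/n^2 with K = 2^(2\<alpha>).
  Hence the distributions M u and M v share mass at least 2^-(6\<alpha>+1).  If the cut moves
  u more than hs away from v, the triangle inequality puts every b more than hs/2 away from
  u or from v, so this shared mass is separated in the exponential demand.  Charging D u v
  to it and using that D is A-respecting gives
  sep_hs(C, D) \<le> 2^(6\<alpha>+1) sep_(hs/2)(C, D^\<alpha>_h,A), which is stronger than needed.\<close>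

lemma walk_append:
  "walk E src tgt x (p @ q) z \<longleftrightarrow> (\<exists>y. walk E src tgt x p y \<and> walk E src tgt y q z)"
  by (induction p arbitrary: x) auto

lemma walk_edges_subset: "walk E src tgt x p y \<Longrightarrow> set p \<subseteq> E"
  by (induction p arbitrary: x) auto

lemma gdist_le_walk:
  "walk E src tgt x p y \<Longrightarrow> gdist E src tgt len x y \<le> ereal (sum_list (map len p))"
  unfolding gdist_def by (rule INF_lower) auto

lemma gdist_nonneg:
  assumes "\<forall>e\<in>E. 0 \<le> len e"
  shows "0 \<le> gdist E src tgt len x y"
  unfolding gdist_def
proof (rule INF_greatest)
  fix p assume "p \<in> {p. walk E src tgt x p y}"
  then have "set p \<subseteq> E" by (simp add: walk_edges_subset)
  then have "0 \<le> sum_list (map len p)"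
    using assms by (intro sum_list_nonneg) auto
  then show "0 \<le> ereal (sum_list (map len p))" by simp
qed

lemma gdist_refl:
  assumes "\<forall>e\<in>E. 0 \<le> len e"
  shows "gdist E src tgt len x x = 0"
  using gdist_le_walk[of E src tgt x "[]" x len] gdist_nonneg[OF assms, of src tgt x x]
  by (simp add: zero_ereal_def)

lemma gdist_triangle:
  assumes "\<forall>e\<in>E. 0 \<le> len e"
  shows "gdist E src tgt len x z \<le> gdist E src tgt len x y + gdist E src tgt len y z"
proof (cases "gdist E src tgt len x y = \<infinity> \<or> gdist E src tgt len y z = \<infinity>")
  case True
  then show ?thesis using gdist_nonneg[OF assms] by auto
next
  case False
  let ?d = "gdist E src tgt len"
  have "0 \<le> ?d x y" "0 \<le> ?d y z" by (rule gdist_nonneg[OF assms])+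
  with False obtain a b where ab: "?d x y = ereal a" "?d y z = ereal b"
    by (cases "?d x y"; cases "?d y z") auto
  show ?thesis
  proof (rule ereal_le_epsilon2)
    fix \<epsilon> :: real assume "0 < \<epsilon>"
    then have "?d x y < ereal (a + \<epsilon>/2)" "?d y z < ereal (b + \<epsilon>/2)" using ab by simp_all
    then obtain p q where p: "walk E src tgt x p y" "sum_list (map len p) < a + \<epsilon>/2"
      and q: "walk E src tgt y q z" "sum_list (map len q) < b + \<epsilon>/2"
      unfolding gdist_def by (auto simp: INF_less_iff)
    then have "?d x z \<le> ereal (sum_list (map len (p @ q)))"
      by (intro gdist_le_walk) (auto simp: walk_append)
    also have "\<dots> \<le> ereal (a + b + \<epsilon>)" using p(2) q(2) by simp
    finally show "?d x z \<le> ?d x y + ?d y z + ereal \<epsilon>" using ab by simp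
  qed
qed

lemma gdist_gt_add_split:
  assumes "\<forall>e\<in>E. 0 \<le> len e" and "ereal (a + b) < gdist E src tgt len x z"
  shows "ereal a < gdist E src tgt len x y \<or> ereal b < gdist E src tgt len y z"
proof (rule ccontr)
  assume "\<not> ?thesis"
  then have "gdist E src tgt len x y + gdist E src tgt len y z \<le> ereal a + ereal b"
    by (intro add_mono) auto
  then show False using assms gdist_triangle[OF assms(1), of src tgt x z y] by simp
qed

lemma gdistbar_nonneg:
  assumes "\<forall>e\<in>E. 0 \<le> len e"
  shows "0 \<le> gdistbar E src tgt len x y"
  unfolding gdistbar_def by (intro add_nonneg_nonneg gdist_nonneg[OF assms])

lemma gdistbar_refl:
  assumes "\<forall>e\<in>E. 0 \<le> len e"
  shows "gdistbar E src tgt len x x = 0"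
  unfolding gdistbar_def gdist_refl[OF assms] by simp

lemma gdistbar_commute: "gdistbar E src tgt len x y = gdistbar E src tgt len y x"
  unfolding gdistbar_def by (simp add: add.commute)

lemma gdistbar_triangle:
  assumes "\<forall>e\<in>E. 0 \<le> len e"
  shows "gdistbar E src tgt len x z \<le> gdistbar E src tgt len x y + gdistbar E src tgt len y z"
proof -
  let ?d = "gdist E src tgt len"
  have "?d x z + ?d z x \<le> (?d x y + ?d y z) + (?d z y + ?d y x)"
    by (intro add_mono gdist_triangle[OF assms])
  also have "\<dots> = (?d x y + ?d y x) + (?d y z + ?d z y)" by (simp add: ac_simps)
  finally show ?thesis unfolding gdistbar_def .
qed

lemma sep_as_double_sum:
  assumes "finite V"
  shows "sep V E src tgt ell H C h' D =
    (\<Sum>x\<in>V. \<Sum>y\<in>V. of_bool (ereal h' < gdist E src tgt (cut_len ell H C) x y) * D x y)"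
proof -
  let ?far = "\<lambda>x y. ereal h' < gdist E src tgt (cut_len ell H C) x y"
  have "{(x, y) \<in> V \<times> V. ?far x y} = {p \<in> V \<times> V. ?far (fst p) (snd p)}" by auto
  then have "sep V E src tgt ell H C h' D = (\<Sum>p\<in>V \<times> V. if ?far (fst p) (snd p) then D (fst p) (snd p) else 0)"
    unfolding sep_def using assms by (simp add: sum.inter_filter)
  also have "\<dots> = (\<Sum>x\<in>V. \<Sum>y\<in>V. if ?far x y then D x y else 0)"
    by (simp add: sum.cartesian_product split_beta)
  also have "\<dots> = (\<Sum>x\<in>V. \<Sum>y\<in>V. of_bool (?far x y) * D x y)"
    by (intro sum.cong refl) simp
  finally show ?thesis .
qed

lemma sep_nonneg:
  assumes "\<forall>x\<in>V. \<forall>y\<in>V. 0 \<le> D x y"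
  shows "0 \<le> sep V E src tgt ell H C h' D"
  unfolding sep_def using assms by (intro sum_nonneg) auto

lemma spars_le_if_sep_le:
  assumes sep_le: "sep V E src tgt ell H C h\<^sub>1 D\<^sub>1 \<le> c * sep V E src tgt ell H C h\<^sub>2 D\<^sub>2"
    and "0 < c" and "0 \<le> sep V E src tgt ell H C h\<^sub>1 D\<^sub>1" and "0 \<le> cut_size E cap C"
    and spars_le: "spars V E src tgt ell cap H C h\<^sub>1 D\<^sub>1 \<le> ereal \<phi>"
  shows "spars V E src tgt ell cap H C h\<^sub>2 D\<^sub>2 \<le> ereal (c * \<phi>)"
proof -
  define S\<^sub>1 where "S\<^sub>1 = sep V E src tgt ell H C h\<^sub>1 D\<^sub>1"
  define S\<^sub>2 where "S\<^sub>2 = sep V E src tgt ell H C h\<^sub>2 D\<^sub>2"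
  have "S\<^sub>1 \<noteq> 0" and \<phi>: "cut_size E cap C / S\<^sub>1 \<le> \<phi>"
    using spars_le unfolding spars_def S\<^sub>1_def[symmetric] by (auto simp: Let_def split: if_splits)
  then have "0 < S\<^sub>1" using assms(3) by (simp add: S\<^sub>1_def)
  then have "0 < S\<^sub>2" using sep_le \<open>0 < c\<close> unfolding S\<^sub>1_def[symmetric] S\<^sub>2_def[symmetric]
    by (metis less_le_trans zero_less_mult_pos)
  have "cut_size E cap C / S\<^sub>2 \<le> c * (cut_size E cap C / S\<^sub>1)"
    using mult_right_mono[OF sep_le assms(4)] \<open>0 < S\<^sub>1\<close> \<open>0 < S\<^sub>2\<close>
    unfolding S\<^sub>1_def[symmetric] S\<^sub>2_def[symmetric] by (simp add: field_simps ac_simps)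
  also have "\<dots> \<le> c * \<phi>" using \<phi> \<open>0 < c\<close> by (intro mult_left_mono) auto
  finally show ?thesis
    using \<open>0 < S\<^sub>2\<close> unfolding spars_def S\<^sub>2_def[symmetric] by (simp add: Let_def)
qed

lemma symmetric_h_length_demand_gdistbar_le:
  assumes "h_length_demand E src tgt ell h D" and "symmetric_demand D" and "0 < D u v"
  shows "gdistbar E src tgt (\<lambda>e. real (ell e)) u v \<le> ereal (2 * h)"
proof -
  have "0 < D v u" using assms(2,3) by (simp add: symmetric_demand_def)
  then have "gdist E src tgt (\<lambda>e. real (ell e)) u v \<le> ereal h"
    "gdist E src tgt (\<lambda>e. real (ell e)) v u \<le> ereal h"
    using assms(1,3) unfolding h_length_demand_def by auto
  then show ?thesis unfolding gdistbar_def using add_mono by fastforce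
qed

lemma sum_routed_demand_le:
  fixes D M I :: "'a \<Rightarrow> 'a \<Rightarrow> real"
  assumes "A_respecting V A D" and "\<forall>x y. 0 \<le> M x y" and "\<forall>x y. 0 \<le> I x y"
  shows "(\<Sum>u\<in>V. \<Sum>v\<in>V. D u v * (\<Sum>b\<in>V. M u b * I u b + M v b * I b v))
    \<le> (\<Sum>x\<in>V. \<Sum>y\<in>V. I x y * (A x * M x y + A y * M y x))"
proof -
  have out: "(\<Sum>v\<in>V. D u v) \<le> A u" and "in": "(\<Sum>v\<in>V. D v u) \<le> A u" if "u \<in> V" for u
    using assms(1) that unfolding A_respecting_def by auto
  have via_source: "(\<Sum>u\<in>V. \<Sum>v\<in>V. \<Sum>b\<in>V. D u v * (M u b * I u b))
      = (\<Sum>u\<in>V. \<Sum>b\<in>V. (\<Sum>v\<in>V. D u v) * (M u b * I u b))"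
    unfolding sum_distrib_right by (rule sum.cong[OF refl], rule sum.swap)
  have via_target: "(\<Sum>u\<in>V. \<Sum>v\<in>V. \<Sum>b\<in>V. D u v * (M v b * I b v))
      = (\<Sum>v\<in>V. \<Sum>b\<in>V. (\<Sum>u\<in>V. D u v) * (M v b * I b v))"
  proof -
    have "(\<Sum>u\<in>V. \<Sum>v\<in>V. \<Sum>b\<in>V. D u v * (M v b * I b v))
        = (\<Sum>v\<in>V. \<Sum>u\<in>V. \<Sum>b\<in>V. D u v * (M v b * I b v))"
      by (rule sum.swap)
    also have "\<dots> = (\<Sum>v\<in>V. \<Sum>b\<in>V. (\<Sum>u\<in>V. D u v) * (M v b * I b v))"
      unfolding sum_distrib_right by (rule sum.cong[OF refl], rule sum.swap)
    finally show ?thesis .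
  qed
  have "(\<Sum>u\<in>V. \<Sum>v\<in>V. D u v * (\<Sum>b\<in>V. M u b * I u b + M v b * I b v))
      = (\<Sum>u\<in>V. \<Sum>b\<in>V. (\<Sum>v\<in>V. D u v) * (M u b * I u b))
        + (\<Sum>v\<in>V. \<Sum>b\<in>V. (\<Sum>u\<in>V. D u v) * (M v b * I b v))"
    unfolding via_source[symmetric] via_target[symmetric]
    by (simp only: sum_distrib_left distrib_left sum.distrib)
  also have "\<dots> \<le> (\<Sum>x\<in>V. \<Sum>y\<in>V. A x * (M x y * I x y)) + (\<Sum>y\<in>V. \<Sum>x\<in>V. A y * (M y x * I x y))"
    using out "in" assms(2,3) by (intro add_mono sum_mono mult_right_mono mult_nonneg_nonneg) auto
  also have "(\<Sum>y\<in>V. \<Sum>x\<in>V. A y * (M y x * I x y)) = (\<Sum>x\<in>V. \<Sum>y\<in>V. A y * (M y x * I x y))"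
    by (rule sum.swap)
  also have "(\<Sum>x\<in>V. \<Sum>y\<in>V. A x * (M x y * I x y)) + (\<Sum>x\<in>V. \<Sum>y\<in>V. A y * (M y x * I x y))
      = (\<Sum>x\<in>V. \<Sum>y\<in>V. I x y * (A x * M x y + A y * M y x))"
    by (simp add: sum.distrib[symmetric] algebra_simps)
  finally show ?thesis .
qed

locale exp_weights =
  fixes V :: "'a set" and E :: "'e set" and src tgt :: "'e \<Rightarrow> 'a" and ell :: "'e \<Rightarrow> nat"
    and h \<alpha> :: real
  assumes finite_V: "finite V" and h_pos: "0 < h"
    and alpha_ge_1: "1 \<le> \<alpha>" and alpha_le_log: "\<alpha> \<le> log 2 (real (card V))"
begin

abbreviation "dbar \<equiv> gdistbar E src tgt (\<lambda>e. real (ell e))"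
abbreviation "w \<equiv> expw V E src tgt ell h \<alpha>"
abbreviation "W \<equiv> expw_node V E src tgt ell h \<alpha>"
abbreviation "M \<equiv> expM V E src tgt ell h \<alpha>"
abbreviation "n \<equiv> real (card V)"
abbreviation "radius \<equiv> 2 * h * log 2 n / \<alpha>"
abbreviation "K \<equiv> (2::real) powr (2 * \<alpha>)"
abbreviation decay :: "real \<Rightarrow> real" where "decay r \<equiv> 2 powr (- \<alpha> * r / h)"

lemma card_V_ge_2: "2 \<le> n"
proof (cases "card V = 0")
  case True
  then show ?thesis using alpha_ge_1 alpha_le_log by (simp add: log_def)
next
  case False
  have "1 \<le> log 2 n" using alpha_ge_1 alpha_le_log by linarith
  then show ?thesis using False by (simp add: le_log_iff)
qed

lemma radius_ge: "2 * h \<le> radius"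
proof -
  have "1 \<le> log 2 n / \<alpha>" using alpha_ge_1 alpha_le_log by simp
  then show ?thesis using h_pos mult_left_mono[of 1 "log 2 n / \<alpha>" "2 * h"] by simp
qed

lemma K_ge_4: "4 \<le> K"
  using powr_mono[of 2 "2 * \<alpha>" "2::real"] alpha_ge_1 by simp

lemma two_K_cube: "2 * K^3 = 2 powr (6 * \<alpha> + 1)"
proof -
  have "K^3 = 2 powr (3 * (2 * \<alpha>))" using powr_power[of "2::real" "2 * \<alpha>" 3] by simp
  then show ?thesis by (simp add: powr_add)
qed

lemma decay_antimono: "r \<le> r' \<Longrightarrow> decay r' \<le> decay r"
  using alpha_ge_1 h_pos by (intro powr_mono) (auto simp: divide_right_mono)

lemma decay_add: "decay (r + r') = decay r * decay r'"
  by (simp add: powr_add[symmetric] algebra_simps diff_divide_distrib)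

lemma decay_2h: "decay (2 * h) = 1 / K"
proof -
  have "- \<alpha> * (2 * h) / h = - (2 * \<alpha>)" using h_pos by simp
  then show ?thesis by (simp only: powr_minus inverse_eq_divide)
qed

lemma decay_radius_minus_2h: "decay (radius - 2 * h) = K / n^2"
proof -
  have "- \<alpha> * (radius - 2 * h) / h = 2 * \<alpha> - 2 * log 2 n"
    using h_pos alpha_ge_1 by (simp add: field_simps)
  then have "decay (radius - 2 * h) = K / (2 powr log 2 n) powr 2"
    by (simp add: powr_diff powr_powr mult.commute)
  also have "\<dots> = K / n^2" using card_V_ge_2 by (simp add: powr_numeral)
  finally show ?thesis .
qed

lemma dbar_nonneg: "0 \<le> dbar x y"
  by (rule gdistbar_nonneg) simp

lemma dbar_real:
  assumes "dbar x y \<le> ereal c"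
  obtains r where "dbar x y = ereal r" "0 \<le> r" "r \<le> c"
  using assms dbar_nonneg[of x y] by (cases "dbar x y") auto

lemma dbar_refl: "dbar x x = 0"
  by (rule gdistbar_refl) simp

lemma expw_nonneg: "0 \<le> w x y"
  unfolding expw_def by (simp add: Let_def)

lemma expw_far: "\<not> dbar x y \<le> ereal radius \<Longrightarrow> w x y = 0"
  using dbar_refl[of x] radius_ge h_pos unfolding expw_def by (auto simp: Let_def)

lemma expw_near: "dbar x y = ereal r \<Longrightarrow> r \<le> radius \<Longrightarrow> w x y = decay r"
  using dbar_refl[of x] unfolding expw_def by (auto simp: Let_def zero_ereal_def)

lemma expw_self: "w x x = 1"
  using expw_near[of x x 0] dbar_refl[of x] radius_ge h_pos by (simp add: zero_ereal_def)

lemma expw_ge_inverse_K: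
  assumes "dbar x y \<le> ereal (2 * h)"
  shows "1 / K \<le> w x y"
proof -
  obtain r where r: "dbar x y = ereal r" "0 \<le> r" "r \<le> 2 * h"
    using dbar_real[OF assms] .
  have "1 / K = decay (2 * h)" by (rule decay_2h[symmetric])
  also have "\<dots> \<le> decay r" by (rule decay_antimono[OF r(3)])
  also have "\<dots> = w x y" using r radius_ge by (intro expw_near[symmetric]) auto
  finally show ?thesis .
qed

text \<open>If b is within the truncation radius of v but not of u, then dbar v b > radius - 2h
  and w v b is already at most K/n^2; this additive error is the price of the truncation.\<close>

lemma expw_transfer:
  assumes near: "dbar u v \<le> ereal (2 * h)"
  shows "w v b \<le> K * w u b + K / n^2"
proof (cases "dbar v b \<le> ereal radius")
  case False
  then show ?thesis using expw_far expw_nonneg[of u b] by simp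
next
  case True
  then obtain r where r: "dbar v b = ereal r" "0 \<le> r" "r \<le> radius"
    by (rule dbar_real)
  have wvb: "w v b = decay r" using r by (intro expw_near)
  have "dbar u b \<le> dbar u v + dbar v b"
    by (rule gdistbar_triangle) simp
  also have "\<dots> \<le> ereal (2 * h + r)" using near r(1) by (metis add_right_mono plus_ereal.simps(1))
  finally have dub: "dbar u b \<le> ereal (2 * h + r)" .
  show ?thesis
  proof (cases "dbar u b \<le> ereal radius")
    case True
    then obtain r' where r': "dbar u b = ereal r'" "r' \<le> radius" by (rule dbar_real)
    have "decay (2 * h + r) \<le> decay r'" using r'(1) dub by (intro decay_antimono) simp
    also have "\<dots> = w u b" using r' by (intro expw_near[symmetric])
    finally have "w v b / K \<le> w u b" unfolding wvb decay_add decay_2h by simp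
    then have "w v b \<le> K * w u b" using K_ge_4 by (simp add: divide_le_eq mult.commute)
    moreover have "0 \<le> K / n^2" by simp
    ultimately show ?thesis by linarith
  next
    case False
    then have "ereal radius < ereal (2 * h + r)" using dub by (meson not_le less_le_trans)
    then have "radius - 2 * h \<le> r" by simp
    then have "w v b \<le> K / n^2"
      unfolding wvb decay_radius_minus_2h[symmetric] by (rule decay_antimono)
    moreover have "0 \<le> K * w u b" using expw_nonneg[of u b] by simp
    ultimately show ?thesis by linarith
  qed
qed

lemma expw_node_ge_1: "x \<in> V \<Longrightarrow> 1 \<le> W x"
  unfolding expw_node_def using member_le_sum[of x V "w x"] finite_V expw_nonneg expw_self
  by simp

lemma expw_node_transfer:
  assumes "u \<in> V" and near: "dbar u v \<le> ereal (2 * h)"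
  shows "W v \<le> 2 * K * W u"
proof -
  have "W v \<le> (\<Sum>b\<in>V. K * w u b + K / n^2)"
    unfolding expw_node_def by (intro sum_mono expw_transfer[OF near])
  also have "\<dots> = K * W u + K / n"
    unfolding expw_node_def using card_V_ge_2 by (simp add: sum.distrib sum_distrib_left power2_eq_square)
  also have "\<dots> \<le> K * W u + K * W u"
  proof -
    have "K / n \<le> K" using card_V_ge_2 K_ge_4 by (simp add: divide_le_eq)
    also have "\<dots> \<le> K * W u" using K_ge_4 expw_node_ge_1[OF \<open>u \<in> V\<close>] by simp
    finally show ?thesis by (rule add_left_mono)
  qed
  finally show ?thesis by (simp add: ac_simps)
qed

lemma sum_min_expw_ge:
  assumes "u \<in> V" and near: "dbar u v \<le> ereal (2 * h)"
  shows "W u / K^2 \<le> (\<Sum>b\<in>V. min (w u b) (w v b))"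
proof -
  have near': "dbar v u \<le> ereal (2 * h)" using near by (simp add: gdistbar_commute)
  have "W u / K - 1 / n = (\<Sum>b\<in>V. w u b / K - 1 / n^2)"
    unfolding expw_node_def using card_V_ge_2
    by (simp add: sum_subtractf sum_divide_distrib power2_eq_square)
  also have "\<dots> \<le> (\<Sum>b\<in>V. min (w u b) (w v b))"
  proof (intro sum_mono)
    fix b
    have "w u b / K - 1 / n^2 \<le> w v b"
      using expw_transfer[OF near', of b] K_ge_4 by (simp add: divide_le_eq algebra_simps)
    moreover have "w u b / K \<le> w u b"
      using K_ge_4 expw_nonneg[of u b] by (simp add: divide_le_eq mult_le_cancel_left1)
    moreover have "0 \<le> 1 / n^2" by simp
    ultimately show "w u b / K - 1 / n^2 \<le> min (w u b) (w v b)" by linarith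
  qed
  finally have far_part: "W u / K - 1 / n \<le> (\<Sum>b\<in>V. min (w u b) (w v b))" .
  have "1 / K \<le> min (w u u) (w v u)"
    using expw_ge_inverse_K[OF near'] expw_self K_ge_4 by simp
  also have "\<dots> \<le> (\<Sum>b\<in>V. min (w u b) (w v b))"
    using assms(1) finite_V expw_nonneg by (intro member_le_sum) auto
  finally have near_part: "1 / K \<le> (\<Sum>b\<in>V. min (w u b) (w v b))" .
  txt \<open>The additive loss 1/n is negligible unless W u is small, and then b = u alone suffices.\<close>
  show ?thesis
  proof (cases "W u \<le> K")
    case True
    then have "W u / K^2 \<le> 1 / K" using K_ge_4 by (simp add: power2_eq_square field_simps)
    then show ?thesis using near_part by linarith
  next
    case False
    have "1 / n \<le> 1 / 2" using card_V_ge_2 by simp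
    also have "\<dots> \<le> (W u / K) * (1 - 1 / K)"
    proof -
      have "1 \<le> W u / K" "1 / 2 \<le> 1 - 1 / K" using False K_ge_4 by simp_all
      then have "1 * (1 / 2) \<le> (W u / K) * (1 - 1 / K)" by (intro mult_mono) auto
      then show ?thesis by simp
    qed
    also have "\<dots> = W u / K - W u / K^2" by (simp add: power2_eq_square field_simps)
    finally have "1 / n \<le> W u / K - W u / K^2" .
    then show ?thesis using far_part by linarith
  qed
qed

lemma sum_min_expM_ge:
  assumes "u \<in> V" "v \<in> V" and near: "dbar u v \<le> ereal (2 * h)"
  shows "1 / 2 powr (6 * \<alpha> + 1) \<le> (\<Sum>b\<in>V. min (M u b) (M v b))"
proof -
  let ?c = "2 * K * W u"
  have "W u \<le> ?c" using K_ge_4 expw_node_ge_1[OF assms(1)] by simp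
  moreover have "W v \<le> ?c" using expw_node_transfer[OF assms(1) near] .
  moreover have "0 < W u" "0 < W v" using expw_node_ge_1 assms(1,2) by fastforce+
  ultimately have "w u b / ?c \<le> M u b" "w v b / ?c \<le> M v b" for b
    unfolding expM_def using expw_nonneg by (auto intro: divide_left_mono)
  then have "min (w u b) (w v b) / ?c \<le> min (M u b) (M v b)" for b
    using K_ge_4 \<open>0 < W u\<close> by (simp add: min_divide_distrib_right min.coboundedI1 min.coboundedI2)
  then have "(\<Sum>b\<in>V. min (w u b) (w v b)) / ?c \<le> (\<Sum>b\<in>V. min (M u b) (M v b))"
    unfolding sum_divide_distrib by (rule sum_mono)
  moreover have "1 / 2 powr (6 * \<alpha> + 1) = (W u / K^2) / ?c"
    unfolding two_K_cube[symmetric] using \<open>0 < W u\<close> by (simp add: power2_eq_square power3_eq_cube)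
  moreover have "(W u / K^2) / ?c \<le> (\<Sum>b\<in>V. min (w u b) (w v b)) / ?c"
    using sum_min_expw_ge[OF assms(1) near] \<open>0 < W u\<close> K_ge_4 by (intro divide_right_mono) auto
  ultimately show ?thesis by linarith
qed

lemma expM_nonneg: "0 \<le> M x y"
  unfolding expM_def expw_node_def using expw_nonneg by (intro divide_nonneg_nonneg sum_nonneg)

lemma separated_pair_covered:
  assumes "u \<in> V" "v \<in> V" and near: "dbar u v \<le> ereal (2 * h)"
    and len_nonneg: "\<forall>e\<in>E. 0 \<le> len e" and separated: "ereal H < gdist E src tgt len u v"
  shows "1 \<le> 2 powr (6 * \<alpha> + 1) *
    (\<Sum>b\<in>V. M u b * of_bool (ereal (H / 2) < gdist E src tgt len u b)
           + M v b * of_bool (ereal (H / 2) < gdist E src tgt len b v))"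
proof -
  let ?far = "\<lambda>x y. ereal (H / 2) < gdist E src tgt len x y"
  have "ereal (H / 2 + H / 2) < gdist E src tgt len u v" using separated by simp
  then have "?far u b \<or> ?far b v" for b by (rule gdist_gt_add_split[OF len_nonneg])
  then have "min (M u b) (M v b) \<le> M u b * of_bool (?far u b) + M v b * of_bool (?far b v)" for b
    using expM_nonneg[of u b] expM_nonneg[of v b] by auto
  then have "(\<Sum>b\<in>V. min (M u b) (M v b))
      \<le> (\<Sum>b\<in>V. M u b * of_bool (?far u b) + M v b * of_bool (?far b v))"
    by (rule sum_mono)
  with sum_min_expM_ge[OF assms(1-3)]
  have "1 / 2 powr (6 * \<alpha> + 1) \<le> (\<Sum>b\<in>V. M u b * of_bool (?far u b) + M v b * of_bool (?far b v))"
    by (rule order_trans)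
  then show ?thesis by (simp add: divide_le_eq mult.commute)
qed

lemma sep_le_sep_exp_demand:
  assumes D_nonneg: "\<forall>x y. 0 \<le> D x y" and D_resp: "A_respecting V A D"
    and D_len: "h_length_demand E src tgt ell h D" and D_sym: "symmetric_demand D"
    and cut_nonneg: "\<forall>e\<in>E. 0 \<le> cut_len ell H C e"
  shows "sep V E src tgt ell H C H D
    \<le> 2 powr (6 * \<alpha> + 1) * sep V E src tgt ell H C (H / 2) (exp_demand V E src tgt ell h \<alpha> A)"
proof -
  let ?c = "2 powr (6 * \<alpha> + 1) :: real"
  let ?dC = "gdist E src tgt (cut_len ell H C)"
  let ?I = "\<lambda>x y. of_bool (ereal (H / 2) < ?dC x y) :: real"
  let ?route = "\<lambda>u v. \<Sum>b\<in>V. M u b * ?I u b + M v b * ?I b v"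
  have pair: "of_bool (ereal H < ?dC u v) * D u v \<le> ?c * (D u v * ?route u v)"
    if "u \<in> V" "v \<in> V" for u v
  proof (cases "ereal H < ?dC u v \<and> 0 < D u v")
    case True
    then have "1 \<le> ?c * ?route u v"
      using symmetric_h_length_demand_gdistbar_le[OF D_len D_sym]
      by (intro separated_pair_covered[OF that _ cut_nonneg]) auto
    then show ?thesis using True mult_left_mono[of 1 "?c * ?route u v" "D u v"] by (simp add: ac_simps)
  next
    case False
    have "0 \<le> ?route u v" using expM_nonneg by (intro sum_nonneg) simp
    then show ?thesis using False D_nonneg[rule_format, of u v] by auto
  qed
  have "sep V E src tgt ell H C H D = (\<Sum>u\<in>V. \<Sum>v\<in>V. of_bool (ereal H < ?dC u v) * D u v)"
    by (rule sep_as_double_sum[OF finite_V])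
  also have "\<dots> \<le> (\<Sum>u\<in>V. \<Sum>v\<in>V. ?c * (D u v * ?route u v))"
    by (intro sum_mono pair)
  also have "\<dots> = ?c * (\<Sum>u\<in>V. \<Sum>v\<in>V. D u v * ?route u v)"
    by (simp add: sum_distrib_left)
  also have "\<dots> \<le> ?c * (\<Sum>x\<in>V. \<Sum>y\<in>V. ?I x y * (A x * M x y + A y * M y x))"
    using D_resp expM_nonneg by (intro mult_left_mono sum_routed_demand_le) auto
  also have "\<dots> = ?c * sep V E src tgt ell H C (H / 2) (exp_demand V E src tgt ell h \<alpha> A)"
    by (simp add: sep_as_double_sum[OF finite_V] exp_demand_def)
  finally show ?thesis .
qed

end

theorem lemma3p10:
  fixes V :: "'a set" and E :: "'e set" and src tgt :: "'e \<Rightarrow> 'a"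
    and ell cap :: "'e \<Rightarrow> nat" and A :: "'a \<Rightarrow> real"
    and D :: "'a \<Rightarrow> 'a \<Rightarrow> real" and C :: "'e \<Rightarrow> real"
    and h s \<alpha> \<phi> :: real
  assumes G: "lengraph V E src tgt ell cap"
    and A_nonneg: "\<forall>v\<in>V. A v \<ge> 0"
    and h_pos: "h > 0" and s_pos: "s > 0"
    and alpha: "1 \<le> \<alpha>" "\<alpha> \<le> log 2 (real (card V))"
    and D_dem: "is_demand V D"
    and D_resp: "A_respecting V A D"
    and D_len: "h_length_demand E src tgt ell h D"
    and D_sym: "symmetric_demand D"
    and C_cut: "moving_cut E (h * s) C"
    and spars_D: "spars V E src tgt ell cap (h * s) C (h * s) D \<le> ereal \<phi>"
  shows "spars V E src tgt ell cap (h * s) C (h * s / 2) (exp_demand V E src tgt ell h \<alpha> A)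
           \<le> ereal (2 powr (8 * \<alpha> + 1) * \<phi>)"
proof -
  have finite_V: "finite V" using G by (simp add: lengraph_def)
  interpret exp_weights V E src tgt ell h \<alpha>
    using finite_V h_pos alpha by unfold_locales
  let ?sepA = "sep V E src tgt ell (h * s) C (h * s / 2) (exp_demand V E src tgt ell h \<alpha> A)"
  have D_nonneg: "\<forall>x y. 0 \<le> D x y" using D_dem by (simp add: is_demand_def)
  have cut_nonneg: "\<forall>e\<in>E. 0 \<le> cut_len ell (h * s) C e"
    using C_cut h_pos s_pos by (simp add: moving_cut_def cut_len_def)
  have cut_size_nonneg: "0 \<le> cut_size E cap C"
    using C_cut unfolding cut_size_def moving_cut_def by (intro sum_nonneg) simp
  have "0 \<le> ?sepA"
    using A_nonneg expM_nonneg unfolding exp_demand_def by (intro sep_nonneg) simp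
  have "sep V E src tgt ell (h * s) C (h * s) D \<le> 2 powr (6 * \<alpha> + 1) * ?sepA"
    using sep_le_sep_exp_demand[OF D_nonneg D_resp D_len D_sym cut_nonneg] by simp
  also have "\<dots> \<le> 2 powr (8 * \<alpha> + 1) * ?sepA"
    using alpha \<open>0 \<le> ?sepA\<close> by (intro mult_right_mono powr_mono) auto
  finally have sep_le: "sep V E src tgt ell (h * s) C (h * s) D \<le> 2 powr (8 * \<alpha> + 1) * ?sepA" .
  have "0 \<le> sep V E src tgt ell (h * s) C (h * s) D" using D_nonneg by (intro sep_nonneg) simp
  from spars_le_if_sep_le[OF sep_le _ this cut_size_nonneg spars_D] show ?thesis by simp
qed

end
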